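(* Let $n$ be a nonnegative integer and $a,c\in\mathbb{C}$ such that all series and quotients below are defined (no lower parameter zero or a negative integer). Then \[ {}_3F_2\!\left(\left.{-n,\frac{a}{2},\frac{a+1}{2} \atop a,c}\right| 4\right) =\frac{(-1)^n(1+a-c)_n}{(c)_n}\,{}_3F_2\!\left(\left.{-\frac{n}{2},\frac{1-n}{2},1-c-n \atop c-a-n,1+a-c}\right| 4\right). \]
   Context: For $a\in\mathbb{C}$, $(a)_0=1$ and $(a)_k=a(a+1)\cdots(a+k-1)$ for $k\ge1$. The hypergeometric series is ${}_rF_s\!\left(\left.{\alpha_1,\ldots,\alpha_r\atop \beta_1,\ldots,\beta_s}\right|z\right)=\sum_{k\ge0}\frac{(\alpha_1)_k\cdots(\alpha_r)_k}{k!(\beta_1)_k\cdots(\beta_s)_k}z^k$, with no lower parameter zero or a negative integer. Since one of $-\frac n2,\frac{1-n}{2}$ is a nonpositive integer, the right-hand series terminates. *)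

theory Defs
  imports "HOL-Analysis.Analysis"
begin

definition hypergeom :: "complex list \<Rightarrow> complex list \<Rightarrow> complex \<Rightarrow> complex" where
  "hypergeom as bs z =
     (\<Sum>k. (\<Prod>a\<leftarrow>as. pochhammer a k) / (fact k * (\<Prod>b\<leftarrow>bs. pochhammer b k)) * z ^ k)"

end

theory Submission
  imports Defs "HOL-Computational_Algebra.Formal_Power_Series"
begin

text \<open>Both series terminate. By the duplication formula
  \<open>(a)\<^sub>2\<^sub>k = 4\<^sup>k (a/2)\<^sub>k ((a+1)/2)\<^sub>k\<close>, the \<open>k\<close>-th term on the left times
  \<open>(c)\<^sub>n\<close> is \<open>n! (-1)\<^sup>k C(a+2k-1, k) C(N, n-k)\<close> with \<open>N = c+n-1\<close>, and the \<open>j\<close>-th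
  term on the right times \<open>(-1)\<^sup>n (1+a-c)\<^sub>n\<close> is \<open>n! C(N-a-n-j, n-2j) C(N, j)\<close>.
  So the identity is the binomial convolution
  \<open>\<Sum>\<^sub>k (-1)\<^sup>k C(x+2k-1, k) C(N, n-k) = \<Sum>\<^sub>j C(N-x-n-j, n-2j) C(N, j)\<close>.
  With \<open>m = n - k\<close>, negating the upper index gives \<open>(-1)\<^sup>k C(x+2k-1, k) = C(m-x-n, n-m)\<close>;
  expanding this by Vandermonde as \<open>\<Sum>\<^sub>j C(m, j) C(-x-n, n-m-j)\<close>, applying trinomial revision
  \<open>C(N, m) C(m, j) = C(N, j) C(N-j, m-j)\<close> and collapsing the sum over \<open>m\<close> by Vandermonde
  again gives the right-hand side.\<close>

definition hypergeom_term :: "complex list \<Rightarrow> complex list \<Rightarrow> complex \<Rightarrow> nat \<Rightarrow> complex" where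
  "hypergeom_term as bs z k =
     (\<Prod>a\<leftarrow>as. pochhammer a k) / (fact k * (\<Prod>b\<leftarrow>bs. pochhammer b k)) * z ^ k"

lemma hypergeom_term_3_2:
  "hypergeom_term [a1, a2, a3] [b1, b2] z k =
    pochhammer a1 k * pochhammer a2 k * pochhammer a3 k / (fact k * pochhammer b1 k * pochhammer b2 k) * z ^ k"
  by (simp add: hypergeom_term_def ac_simps)

lemma hypergeom_term_eq_0:
  assumes "- of_nat m \<in> set as" and "m < k"
  shows "hypergeom_term as bs z k = 0"
proof -
  have "pochhammer (- of_nat m) k = (0 :: complex)"
    using assms(2) by (simp add: pochhammer_of_nat_eq_0_iff)
  then have "(\<Prod>a\<leftarrow>as. pochhammer a k) = 0"
    using assms(1) by (force simp: prod_list_zero_iff)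
  then show ?thesis
    by (simp add: hypergeom_term_def)
qed

lemma hypergeom_terminating:
  assumes "- of_nat m \<in> set as"
  shows "hypergeom as bs z = (\<Sum>k\<le>m. hypergeom_term as bs z k)"
  unfolding hypergeom_def hypergeom_term_def[symmetric]
  by (rule suminf_finite) (auto intro: hypergeom_term_eq_0[OF assms])

lemma neg_of_nat_half_div_2:
  "- of_nat (n div 2) \<in> {- of_nat n / 2, (1 - of_nat n) / (2 :: 'a::field_char_0)}"
proof (cases "even n")
  case True
  then show ?thesis by (auto elim!: evenE simp: field_simps)
next
  case False
  then show ?thesis by (auto elim!: oddE simp: field_simps)
qed

lemma pochhammer_nonzero: "z \<notin> \<int>\<^sub>\<le>\<^sub>0 \<Longrightarrow> pochhammer z k \<noteq> (0 :: 'a::field_char_0)"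
  by (auto simp: pochhammer_eq_0_iff)

lemma pochhammer_half_duplication:
  fixes z :: "'a::field_char_0"
  shows "pochhammer z (2 * k) = 4 ^ k * pochhammer (z / 2) k * pochhammer ((z + 1) / 2) k"
  using pochhammer_double[of "z / 2" k] by (simp add: power_mult add_divide_distrib)

lemma pochhammer_split_gbinomial:
  fixes z :: "'a::field_char_0"
  assumes "k \<le> n"
  shows "pochhammer z n = pochhammer z k * fact (n - k) * ((z + of_nat n - 1) gchoose (n - k))"
  using assms by (simp add: pochhammer_product[OF assms] gbinomial_pochhammer' of_nat_diff algebra_simps)

lemma pochhammer_neg_of_nat:
  "pochhammer (- of_nat n) k = (-1) ^ k * fact k * (of_nat (n choose k) :: 'a::field_char_0)"
  by (simp add: binomial_gbinomial gbinomial_pochhammer)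

lemma pochhammer_reflected_split:
  fixes b :: "'a::field_char_0"
  assumes "2 * j \<le> n"
  shows "pochhammer (1 + b) n = (-1) ^ (n + j) * pochhammer (1 + b) j * pochhammer (- b - of_nat n) j
    * fact (n - 2 * j) * ((- b - of_nat j - 1) gchoose (n - 2 * j))"
proof -
  obtain r where "n = 2 * j + r"
    using assms le_Suc_ex by blast
  then have n: "n = j + r + j"
    by simp
  have "pochhammer (1 + b) n =
      pochhammer (1 + b) j * pochhammer (1 + b + of_nat j) r * pochhammer (1 + b + of_nat (j + r)) j"
    unfolding n pochhammer_product' by (simp add: ac_simps)
  moreover have "pochhammer (1 + b + of_nat j) r = fact r * ((b + of_nat j + of_nat r) gchoose r)"
    by (simp add: gbinomial_pochhammer' algebra_simps)
  moreover have "(b + of_nat j + of_nat r) gchoose r = (-1) ^ r * ((- b - of_nat j - 1) gchoose r)"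
    by (subst gbinomial_negated_upper) (simp add: algebra_simps)
  moreover have "pochhammer (1 + b + of_nat (j + r)) j = (-1) ^ j * pochhammer (- b - of_nat n) j"
    using pochhammer_minus'[of "b + of_nat n" j] by (simp add: n algebra_simps)
  ultimately show ?thesis
    by (simp add: n power_add ac_simps)
qed

lemma fact_mult_fact_mult_binomial:
  "k \<le> n \<Longrightarrow> fact k * fact (n - k) * of_nat (n choose k) = (fact n :: 'a::semiring_char_0)"
  by (metis binomial_fact_lemma of_nat_fact of_nat_mult)

lemma sum_diagonal_reindex:
  fixes f :: "nat \<Rightarrow> nat \<Rightarrow> 'a::comm_monoid_add"
  assumes "\<And>m j. m < j \<Longrightarrow> f m j = 0"
  shows "(\<Sum>m\<le>n. \<Sum>j\<le>n - m. f m j) = (\<Sum>j\<le>n div 2. \<Sum>i\<le>n - 2 * j. f (i + j) j)"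
proof -
  let ?S = "Sigma {..n} (\<lambda>m. {..n - m})"
  have "(\<Sum>m\<le>n. \<Sum>j\<le>n - m. f m j) = (\<Sum>(m, j)\<in>?S. f m j)"
    by (simp add: sum.Sigma)
  also have "\<dots> = (\<Sum>(j, i)\<in>Sigma {..n div 2} (\<lambda>j. {..n - 2 * j}). f (i + j) j)"
    by (rule sum.reindex_bij_witness_not_neutral[where S' = "{}" and T' = "?S \<inter> {(m, j). m < j}"
          and j = "\<lambda>(j, i). (i + j, j)" and i = "\<lambda>(m, j). (j, m - j)", symmetric])
      (auto intro: assms)
  also have "\<dots> = (\<Sum>j\<le>n div 2. \<Sum>i\<le>n - 2 * j. f (i + j) j)"
    by (simp add: sum.Sigma)
  finally show ?thesis .
qed

lemma gbinomial_Vandermonde_atMost: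
  fixes u v :: "'a::field_char_0"
  shows "(u + v) gchoose m = (\<Sum>i\<le>m. (u gchoose i) * (v gchoose (m - i)))"
  by (simp add: gbinomial_Vandermonde[symmetric] atLeast0AtMost)

lemma gbinomial_alternating_convolution:
  fixes x N :: "'a::field_char_0"
  shows "(\<Sum>k\<le>n. (-1) ^ k * ((x + 2 * of_nat k - 1) gchoose k) * (N gchoose (n - k))) =
    (\<Sum>j\<le>n div 2. ((N - x - of_nat n - of_nat j) gchoose (n - 2 * j)) * (N gchoose j))"
proof -
  define f where "f m j = (N gchoose m) * (of_nat m gchoose j) * ((- x - of_nat n) gchoose (n - m - j))"
    for m j
  have "(\<Sum>k\<le>n. (-1) ^ k * ((x + 2 * of_nat k - 1) gchoose k) * (N gchoose (n - k))) =
      (\<Sum>m\<le>n. (-1) ^ (n - m) * ((x + 2 * of_nat (n - m) - 1) gchoose (n - m)) * (N gchoose m))"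
    unfolding atLeast0AtMost[symmetric] by (subst sum.atLeastAtMost_rev) simp
  also have "\<dots> = (\<Sum>m\<le>n. \<Sum>j\<le>n - m. f m j)"
  proof (rule sum.cong[OF refl])
    fix m assume "m \<in> {..n}"
    then have "(-1) ^ (n - m) * ((x + 2 * of_nat (n - m) - 1) gchoose (n - m)) =
        (of_nat m + (- x - of_nat n)) gchoose (n - m)"
      by (subst gbinomial_negated_upper[of "of_nat m + (- x - of_nat n)"])
        (simp add: of_nat_diff algebra_simps)
    then show "(-1) ^ (n - m) * ((x + 2 * of_nat (n - m) - 1) gchoose (n - m)) * (N gchoose m) =
        (\<Sum>j\<le>n - m. f m j)"
      by (simp add: gbinomial_Vandermonde_atMost f_def sum_distrib_left sum_distrib_right ac_simps)
  qed
  also have "\<dots> = (\<Sum>j\<le>n div 2. \<Sum>i\<le>n - 2 * j. f (i + j) j)"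
    by (rule sum_diagonal_reindex) (simp add: f_def flip: binomial_gbinomial)
  also have "\<dots> = (\<Sum>j\<le>n div 2. ((N - x - of_nat n - of_nat j) gchoose (n - 2 * j)) * (N gchoose j))"
  proof (rule sum.cong[OF refl])
    fix j
    have "n - (i + j) - j = n - 2 * j - i" for i
      by simp
    then have "f (i + j) j =
        (N gchoose j) * ((N - of_nat j) gchoose i) * ((- x - of_nat n) gchoose (n - 2 * j - i))" for i
      using gbinomial_trinomial_revision[of j "i + j" N] by (simp add: f_def ac_simps)
    then have "(\<Sum>i\<le>n - 2 * j. f (i + j) j) =
        (N gchoose j) *
          (\<Sum>i\<le>n - 2 * j. ((N - of_nat j) gchoose i) * ((- x - of_nat n) gchoose (n - 2 * j - i)))"
      by (simp add: sum_distrib_left mult.assoc)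
    also have "\<dots> = (N gchoose j) * ((N - of_nat j + (- x - of_nat n)) gchoose (n - 2 * j))"
      by (simp only: gbinomial_Vandermonde_atMost)
    finally show "(\<Sum>i\<le>n - 2 * j. f (i + j) j) =
        ((N - x - of_nat n - of_nat j) gchoose (n - 2 * j)) * (N gchoose j)"
      by (simp add: algebra_simps)
  qed
  finally show ?thesis .
qed

lemma hypergeom_term_left:
  fixes a c :: complex
  assumes "k \<le> n" and "a \<notin> \<int>\<^sub>\<le>\<^sub>0" and "c \<notin> \<int>\<^sub>\<le>\<^sub>0"
  shows "pochhammer c n * hypergeom_term [- of_nat n, a / 2, (a + 1) / 2] [a, c] 4 k =
    fact n * ((-1) ^ k * ((a + 2 * of_nat k - 1) gchoose k) * ((c + of_nat n - 1) gchoose (n - k)))"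
proof -
  have nonzero: "pochhammer a k \<noteq> 0" "pochhammer c k \<noteq> 0"
    using assms(2,3) by (simp_all add: pochhammer_nonzero)
  then have "pochhammer c n * hypergeom_term [- of_nat n, a / 2, (a + 1) / 2] [a, c] 4 k =
      pochhammer (- of_nat n) k / fact k * (pochhammer a (2 * k) / pochhammer a k)
        * (pochhammer c n / pochhammer c k)"
    unfolding pochhammer_half_duplication by (simp add: hypergeom_term_def field_simps)
  also have "\<dots> = (-1) ^ k * (fact k * fact (n - k) * of_nat (n choose k))
      * ((a + 2 * of_nat k - 1) gchoose k) * ((c + of_nat n - 1) gchoose (n - k))"
    using nonzero by (simp add: pochhammer_neg_of_nat pochhammer_split_gbinomial[of k "2 * k"]
          pochhammer_split_gbinomial[OF assms(1), of c])
  also have "\<dots> = fact n * ((-1) ^ k * ((a + 2 * of_nat k - 1) gchoose k)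
      * ((c + of_nat n - 1) gchoose (n - k)))"
    unfolding fact_mult_fact_mult_binomial[OF assms(1)] by (simp add: ac_simps)
  finally show ?thesis .
qed

lemma hypergeom_term_right:
  fixes a c :: complex
  assumes "2 * j \<le> n" and "c - a - of_nat n \<notin> \<int>\<^sub>\<le>\<^sub>0" and "1 + a - c \<notin> \<int>\<^sub>\<le>\<^sub>0"
  shows "(-1) ^ n * pochhammer (1 + a - c) n *
      hypergeom_term [- of_nat n / 2, (1 - of_nat n) / 2, 1 - c - of_nat n]
        [c - a - of_nat n, 1 + a - c] 4 j =
    fact n * (((c + of_nat n - 1 - a - of_nat n - of_nat j) gchoose (n - 2 * j))
      * ((c + of_nat n - 1) gchoose j))"
proof -
  have nonzero: "pochhammer (c - a - of_nat n) j \<noteq> 0" "pochhammer (1 + a - c) j \<noteq> 0"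
    using assms(2,3) by (simp_all add: pochhammer_nonzero)
  have parameters: "1 + (a - c) = 1 + a - c" "- (a - c) - of_nat n = c - a - of_nat n"
    "- (a - c) - of_nat j - 1 = c - a - of_nat j - 1"
    by (simp_all add: algebra_simps)
  have upper: "pochhammer (1 + a - c) n = (-1) ^ (n + j) * pochhammer (1 + a - c) j
      * pochhammer (c - a - of_nat n) j * fact (n - 2 * j) * ((c - a - of_nat j - 1) gchoose (n - 2 * j))"
    using pochhammer_reflected_split[OF assms(1), of "a - c"] by (simp only: parameters)
  have "pochhammer (- of_nat n / 2) j * pochhammer ((1 - of_nat n) / 2) j =
      fact (2 * j) * of_nat (n choose (2 * j)) / (4 ^ j :: complex)"
    using pochhammer_half_duplication[of "- of_nat n :: complex" j]
    by (simp add: pochhammer_neg_of_nat field_simps)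
  moreover have "pochhammer (1 - c - of_nat n) j = (-1) ^ j * fact j * ((c + of_nat n - 1) gchoose j)"
    by (simp add: gbinomial_pochhammer diff_diff_eq)
  ultimately have "(-1) ^ n * pochhammer (1 + a - c) n *
      hypergeom_term [- of_nat n / 2, (1 - of_nat n) / 2, 1 - c - of_nat n]
        [c - a - of_nat n, 1 + a - c] 4 j =
      (-1) ^ (n + (n + j) + j) * (fact (2 * j) * fact (n - 2 * j) * of_nat (n choose (2 * j)))
        * ((c - a - of_nat j - 1) gchoose (n - 2 * j)) * ((c + of_nat n - 1) gchoose j)"
    unfolding hypergeom_term_3_2 upper using nonzero by (simp add: field_simps power_add)
  also have "\<dots> = fact n * (((c + of_nat n - 1 - a - of_nat n - of_nat j) gchoose (n - 2 * j))
      * ((c + of_nat n - 1) gchoose j))"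
    unfolding fact_mult_fact_mult_binomial[OF assms(1)] by (simp add: algebra_simps)
  finally show ?thesis .
qed

theorem mainTheorem9:
  fixes n :: nat and a c :: complex
  assumes "a \<notin> \<int>\<^sub>\<le>\<^sub>0" and "c \<notin> \<int>\<^sub>\<le>\<^sub>0"
    and "c - a - of_nat n \<notin> \<int>\<^sub>\<le>\<^sub>0" and "1 + a - c \<notin> \<int>\<^sub>\<le>\<^sub>0"
  shows "hypergeom [- of_nat n, a / 2, (a + 1) / 2] [a, c] 4 =
    (-1) ^ n * pochhammer (1 + a - c) n / pochhammer c n *
    hypergeom [- of_nat n / 2, (1 - of_nat n) / 2, 1 - c - of_nat n] [c - a - of_nat n, 1 + a - c] 4"
proof -
  define N where "N = c + of_nat n - 1"
  have L: "hypergeom [- of_nat n, a / 2, (a + 1) / 2] [a, c] 4 =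
      (\<Sum>k\<le>n. hypergeom_term [- of_nat n, a / 2, (a + 1) / 2] [a, c] 4 k)"
    by (rule hypergeom_terminating) simp
  have R: "hypergeom [- of_nat n / 2, (1 - of_nat n) / 2, 1 - c - of_nat n]
        [c - a - of_nat n, 1 + a - c] 4 =
      (\<Sum>j\<le>n div 2. hypergeom_term [- of_nat n / 2, (1 - of_nat n) / 2, 1 - c - of_nat n]
        [c - a - of_nat n, 1 + a - c] 4 j)"
    by (rule hypergeom_terminating) (use neg_of_nat_half_div_2[of n] in auto)
  have "pochhammer c n * hypergeom [- of_nat n, a / 2, (a + 1) / 2] [a, c] 4 =
      fact n * (\<Sum>k\<le>n. (-1) ^ k * ((a + 2 * of_nat k - 1) gchoose k) * (N gchoose (n - k)))"
    unfolding L sum_distrib_left N_def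
    by (rule sum.cong[OF refl], rule hypergeom_term_left) (use assms in auto)
  also have "\<dots> =
      fact n * (\<Sum>j\<le>n div 2. ((N - a - of_nat n - of_nat j) gchoose (n - 2 * j)) * (N gchoose j))"
    by (simp only: gbinomial_alternating_convolution)
  also have "\<dots> = (-1) ^ n * pochhammer (1 + a - c) n *
      hypergeom [- of_nat n / 2, (1 - of_nat n) / 2, 1 - c - of_nat n] [c - a - of_nat n, 1 + a - c] 4"
    unfolding R sum_distrib_left N_def
    by (rule sum.cong[OF refl], rule hypergeom_term_right[symmetric]) (use assms in auto)
  finally show ?thesis
    using pochhammer_nonzero[OF assms(2), of n] by (simp add: field_simps)
qed

end
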